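(* Let $M$ be a $k$-connected matroid on $E$, where $k\geq 2$ and $|E|\geq \max\{3k-5,2\}$. Then $M$ has a unique tangle $\mathcal T$ of order $k$. Moreover a subset $A$ of $E$ belongs to $\mathcal T$ if and only if $|A|\leq k-2$.
   Context: For a matroid $M$ on $E$ with rank function $r$, $\lambda_M(X)=r(X)+r(E-X)-r(M)+1$. For a positive integer $l$, an $l$-separation (in Tutte's sense) is a partition $(X,Y)$ of $E$ with $|X|,|Y|\ge l$ and $\lambda_M(X)\le l$; $M$ is $k$-connected if it has no $l$-separation for any $l<k$. A tangle of order $k$ in $M$ is a collection $\mathcal T$ of subsets of $E$ such that (T1) $\lambda_M(A)<k$ for all $A\in\mathcal T$; (T2) if $\lambda_M(A)\le k-1$ then $A\in\mathcal T$ or $E-A\in\mathcal T$; (T3) $A\cup B\cup C\ne E$ for all $A,B,C\in\mathcal T$; (T4) $E-\{e\}\notin\mathcal T$ for each $e\in E$. *)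

theory Defs
  imports Main
begin

definition matroid :: "'a set \<Rightarrow> ('a set \<Rightarrow> nat) \<Rightarrow> bool" where
  "matroid E r \<longleftrightarrow> finite E
     \<and> (\<forall>X. X \<subseteq> E \<longrightarrow> r X \<le> card X)
     \<and> (\<forall>X Y. X \<subseteq> Y \<and> Y \<subseteq> E \<longrightarrow> r X \<le> r Y)
     \<and> (\<forall>X Y. X \<subseteq> E \<and> Y \<subseteq> E \<longrightarrow> r (X \<union> Y) + r (X \<inter> Y) \<le> r X + r Y)"

definition conn :: "'a set \<Rightarrow> ('a set \<Rightarrow> nat) \<Rightarrow> 'a set \<Rightarrow> int" where
  "conn E r X = int (r X) + int (r (E - X)) - int (r E) + 1"

definition separation :: "'a set \<Rightarrow> ('a set \<Rightarrow> nat) \<Rightarrow> nat \<Rightarrow> 'a set \<Rightarrow> 'a set \<Rightarrow> bool" where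
  "separation E r l X Y \<longleftrightarrow> X \<union> Y = E \<and> X \<inter> Y = {}
     \<and> card X \<ge> l \<and> card Y \<ge> l \<and> conn E r X \<le> int l"

definition k_connected :: "'a set \<Rightarrow> ('a set \<Rightarrow> nat) \<Rightarrow> nat \<Rightarrow> bool" where
  "k_connected E r k \<longleftrightarrow> (\<forall>l X Y. 0 < l \<and> l < k \<longrightarrow> \<not> separation E r l X Y)"

definition tangle :: "'a set \<Rightarrow> ('a set \<Rightarrow> nat) \<Rightarrow> nat \<Rightarrow> 'a set set \<Rightarrow> bool" where
  "tangle E r k \<T> \<longleftrightarrow> \<T> \<subseteq> Pow E
     \<and> (\<forall>A\<in>\<T>. conn E r A < int k)
     \<and> (\<forall>A. A \<subseteq> E \<and> conn E r A \<le> int k - 1 \<longrightarrow> A \<in> \<T> \<or> E - A \<in> \<T>)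
     \<and> (\<forall>A\<in>\<T>. \<forall>B\<in>\<T>. \<forall>C\<in>\<T>. A \<union> B \<union> C \<noteq> E)
     \<and> (\<forall>e\<in>E. E - {e} \<notin> \<T>)"

end

theory Submission
  imports Defs
begin

text \<open>Since \<open>\<lambda>(A) \<le> |A| + 1\<close>, every set of size at most \<open>k - 2\<close> has connectivity below
  \<open>k\<close>, and \<open>k\<close>-connectivity says that whenever \<open>\<lambda>(A) \<le> k - 1\<close> one of \<open>A\<close>, \<open>E - A\<close> has
  size at most \<open>k - 2\<close>. Hence a tangle of order \<open>k\<close> is forced to be the collection of
  small sets: by (T2), (T4) and (T3) it contains every singleton and, growing one
  element at a time, every set of size at most \<open>k - 2\<close>; a large member would have a
  small complement, which (T3) forbids. Conversely the small sets form a tangle,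
  because three of them cover at most \<open>3k - 6 < |E|\<close> elements.\<close>

lemma tangle_subset_Pow: "tangle E r k T \<Longrightarrow> T \<subseteq> Pow E"
  unfolding tangle_def by simp

lemma tangle_conn_less: "tangle E r k T \<Longrightarrow> A \<in> T \<Longrightarrow> conn E r A < int k"
  unfolding tangle_def by simp

lemma tangle_mem_or_complement_mem:
  "tangle E r k T \<Longrightarrow> A \<subseteq> E \<Longrightarrow> conn E r A \<le> int k - 1 \<Longrightarrow> A \<in> T \<or> E - A \<in> T"
  unfolding tangle_def by simp

lemma tangle_no_triple_cover:
  "tangle E r k T \<Longrightarrow> A \<in> T \<Longrightarrow> B \<in> T \<Longrightarrow> C \<in> T \<Longrightarrow> A \<union> B \<union> C \<noteq> E"
  unfolding tangle_def by simp

lemma tangle_Diff_singleton_not_mem: "tangle E r k T \<Longrightarrow> e \<in> E \<Longrightarrow> E - {e} \<notin> T"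
  unfolding tangle_def by simp

lemma tangle_complement_not_mem:
  assumes t: "tangle E r k T" and A: "A \<in> T"
  shows "E - A \<notin> T"
proof
  assume "E - A \<in> T"
  moreover have "A \<union> (E - A) \<union> (E - A) = E"
    using A tangle_subset_Pow[OF t] by auto
  ultimately show False
    using tangle_no_triple_cover[OF t A] by blast
qed

lemma conn_le_card_Suc:
  assumes m: "matroid E r" and A: "A \<subseteq> E"
  shows "conn E r A \<le> int (card A) + 1"
proof -
  have "r A \<le> card A" "r (E - A) \<le> r E"
    using m A unfolding matroid_def by (simp, meson Diff_subset order_refl)
  then show ?thesis unfolding conn_def by linarith
qed

lemma k_connected_small_side:
  assumes kc: "k_connected E r k" and k: "k \<ge> 2" and A: "A \<subseteq> E"
    and conn: "conn E r A \<le> int k - 1"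
  shows "card A \<le> k - 2 \<or> card (E - A) \<le> k - 2"
proof (rule ccontr)
  assume "\<not> ?thesis"
  with A conn k have "separation E r (k - 1) A (E - A)"
    unfolding separation_def by auto
  moreover have "0 < k - 1" "k - 1 < k" using k by auto
  ultimately show False using kc unfolding k_connected_def by blast
qed

definition small_sets :: "'a set \<Rightarrow> nat \<Rightarrow> 'a set set" where
  "small_sets E k = {A. A \<subseteq> E \<and> card A \<le> k - 2}"

lemma tangle_small_sets:
  assumes m: "matroid E r" and kc: "k_connected E r k" and k: "k \<ge> 2"
    and size: "card E \<ge> max (3 * k - 5) 2"
  shows "tangle E r k (small_sets E k)"
  unfolding tangle_def
proof (intro conjI ballI allI impI)
  have fin: "finite E" using m unfolding matroid_def by simp
  show "small_sets E k \<subseteq> Pow E" unfolding small_sets_def by auto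
  show "conn E r A < int k" if "A \<in> small_sets E k" for A
    using that conn_le_card_Suc[OF m, of A] k unfolding small_sets_def by auto
  show "A \<in> small_sets E k \<or> E - A \<in> small_sets E k"
    if "A \<subseteq> E \<and> conn E r A \<le> int k - 1" for A
    using that k_connected_small_side[OF kc k, of A] unfolding small_sets_def by auto
  show "A \<union> B \<union> C \<noteq> E"
    if "A \<in> small_sets E k" "B \<in> small_sets E k" "C \<in> small_sets E k" for A B C
  proof -
    have "card (A \<union> B \<union> C) \<le> card A + card B + card C"
      by (meson add_le_mono1 card_Un_le le_trans)
    also have "\<dots> < card E"
      using that size k unfolding small_sets_def by auto
    finally show ?thesis by auto
  qed
  show "E - {e} \<notin> small_sets E k" if "e \<in> E" for e
    using that fin size k unfolding small_sets_def by auto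
qed

lemma small_sets_subset_tangle:
  assumes m: "matroid E r" and t: "tangle E r k T" and k: "k \<ge> 2"
  shows "small_sets E k \<subseteq> T"
proof
  fix A assume "A \<in> small_sets E k"
  then have A: "A \<subseteq> E" "card A \<le> k - 2" unfolding small_sets_def by auto
  have "finite A"
    using A(1) m finite_subset unfolding matroid_def by metis
  from this A show "A \<in> T"
  proof (induction A rule: finite_induct)
    case empty
    have "conn E r {} \<le> int k - 1" using conn_le_card_Suc[OF m, of "{}"] k by simp
    then show ?case
      using tangle_mem_or_complement_mem[OF t] tangle_no_triple_cover[OF t, of E E E] by force
  next
    case (insert e F)
    have F: "F \<in> T" and e: "e \<in> E" and k3: "k \<ge> 3" using insert by auto
    have "conn E r {e} \<le> int k - 1" using conn_le_card_Suc[OF m, of "{e}"] e k3 by simp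
    then have singleton: "{e} \<in> T"
      using tangle_mem_or_complement_mem[OF t, of "{e}"] tangle_Diff_singleton_not_mem[OF t e] e
      by blast
    have "F \<union> {e} \<union> (E - insert e F) = E" using insert.prems by auto
    then have "E - insert e F \<notin> T" using tangle_no_triple_cover[OF t F singleton] by metis
    moreover have "conn E r (insert e F) \<le> int k - 1"
      using conn_le_card_Suc[OF m insert.prems(1)] insert.prems(2) k3 by linarith
    ultimately show ?case using tangle_mem_or_complement_mem[OF t insert.prems(1)] by blast
  qed
qed

lemma tangle_eq_small_sets:
  assumes m: "matroid E r" and t: "tangle E r k T" and kc: "k_connected E r k" and k: "k \<ge> 2"
  shows "T = small_sets E k"
proof (rule antisym[OF subsetI small_sets_subset_tangle[OF m t k]])
  fix A assume AT: "A \<in> T"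
  have A: "A \<subseteq> E" using AT tangle_subset_Pow[OF t] by auto
  have "conn E r A \<le> int k - 1" using tangle_conn_less[OF t AT] by linarith
  then have "card A \<le> k - 2 \<or> E - A \<in> small_sets E k"
    using k_connected_small_side[OF kc k A] A unfolding small_sets_def by auto
  moreover have "E - A \<notin> small_sets E k"
    using tangle_complement_not_mem[OF t AT] small_sets_subset_tangle[OF m t k] by blast
  ultimately show "A \<in> small_sets E k" using A unfolding small_sets_def by auto
qed

theorem corollary2p4:
  fixes E :: "'a set" and r :: "'a set \<Rightarrow> nat" and k :: nat
  assumes "matroid E r"
    and "k_connected E r k"
    and "k \<ge> 2"
    and "card E \<ge> max (3 * k - 5) 2"
  shows "(\<exists>!\<T>. tangle E r k \<T>)
    \<and> (\<forall>\<T>. tangle E r k \<T> \<longrightarrow> (\<forall>A. A \<subseteq> E \<longrightarrow> (A \<in> \<T> \<longleftrightarrow> card A \<le> k - 2)))"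
proof -
  have "tangle E r k (small_sets E k)"
    using tangle_small_sets[OF assms] .
  moreover have "\<And>T. tangle E r k T \<Longrightarrow> T = small_sets E k"
    using tangle_eq_small_sets[OF assms(1) _ assms(2,3)] .
  ultimately show ?thesis unfolding small_sets_def by blast
qed

end
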